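(* For integers $p\ge1$ and $0\le k\le n$, and all $x$, \[ \sum_{j=0}^{n-k}\binom{n-k}{j}(-1)^{j}E_{j+k}^{(p)}(x)=(-1)^{n+k+1}\sum_{j=0}^{k}\binom{k}{j}E_{n-j}^{(p)}(x)+2(-1)^{n+k}\sum_{j=0}^{k}\binom{k}{j}E_{n-j}^{(p-1)}(x-1). \]
   Context: For $p\ge0$, the higher-order Euler polynomials $E_n^{(p)}(x)$ are defined by $\sum_{n\ge0}E_n^{(p)}(x)\frac{t^n}{n!}=e^{xt}\left(\frac{2}{e^t+1}\right)^p$; in particular $E_n^{(0)}(x)=x^n$. *)

theory Defs
  imports "HOL-Computational_Algebra.Formal_Power_Series"
begin

definition higher_euler :: "nat \<Rightarrow> nat \<Rightarrow> real \<Rightarrow> real" where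
  "higher_euler p n x =
     fact n * fps_nth (fps_exp x * (fps_const 2 / (fps_exp 1 + 1)) ^ p) n"

end

theory Submission
  imports Defs "HOL-Computational_Algebra.Polynomial"
begin

(* Write E_m for higher_euler p m x.  Two analytic facts about the
   generating function e^(xt) (2/(e^t+1))^p are used:
     (R) E^(p)_m(x) + E^(p)_m(x-1) = 2 E^(p-1)_m(x-1)     (since (e^t+1)*2/(e^t+1) = 2),
     (T) E^(p)_m(x-1) = sum_i C(m,i) (-1)^(m-i) E^(p)_i(x)  (multiply by e^(-t)).
   By (T), the right-hand sides involve the "umbral" expressions (E-1)^(n-j), where
   E^i is read as E_i.  Making this precise with the linear functional
   umbral_eval e q = sum_i coeff q i * e i on polynomials, the theorem reduces to
   the polynomial identity  sum_j C(k,j) (X-1)^(n-j) = (X-1)^(n-k) X^k, which is the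
   binomial theorem for ((X-1)+1)^k. *)


text \<open>Umbral evaluation: replace the monomial X^i by e i.  The sum is
  truncated at n, which is harmless for polynomials of degree at most n.\<close>
definition umbral_eval :: "nat \<Rightarrow> (nat \<Rightarrow> 'a::comm_ring_1) \<Rightarrow> 'a poly \<Rightarrow> 'a" where
  "umbral_eval n e q = (\<Sum>i\<le>n. coeff q i * e i)"

lemma umbral_eval_sum_monom:
  assumes "finite A" "\<forall>j\<in>A. f j \<le> n"
  shows "umbral_eval n e (\<Sum>j\<in>A. monom (c j) (f j)) = (\<Sum>j\<in>A. c j * e (f j))"
proof -
  have "umbral_eval n e (\<Sum>j\<in>A. monom (c j) (f j))
      = (\<Sum>i\<le>n. \<Sum>j\<in>A. (if f j = i then c j else 0) * e i)"
    unfolding umbral_eval_def coeff_sum coeff_monom by (simp add: sum_distrib_right)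
  also have "\<dots> = (\<Sum>j\<in>A. \<Sum>i\<in>{..n}. (if i = f j then c j * e i else 0))"
    by (subst sum.swap) (intro sum.cong refl, auto)
  also have "\<dots> = (\<Sum>j\<in>A. c j * e (f j))"
    using assms by (intro sum.cong) (auto simp: sum.delta)
  finally show ?thesis .
qed

lemma umbral_eval_smult: "umbral_eval n e (smult c q) = c * umbral_eval n e q"
  unfolding umbral_eval_def by (simp add: sum_distrib_left mult.assoc)

lemma umbral_eval_sum_smult:
  assumes "finite A"
  shows "umbral_eval n e (\<Sum>j\<in>A. smult (c j) (q j)) = (\<Sum>j\<in>A. c j * umbral_eval n e (q j))"
  unfolding umbral_eval_def coeff_sum coeff_smult
  by (simp add: sum_distrib_left sum_distrib_right mult.assoc) (subst sum.swap, rule refl)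

text \<open>Binomial expansion of X^k (1-X)^m; its umbral value is the left-hand side
  of the main theorem.\<close>
lemma monom_times_one_minus_X_power:
  "monom 1 k * (1 - monom (1::'a::comm_ring_1) 1) ^ m
     = (\<Sum>j=0..m. monom (of_nat (m choose j) * (-1) ^ j) (j + k))"
proof -
  have "(1 - monom (1::'a) 1) ^ m = (monom (-1) 1 + 1) ^ m"
    by (simp add: minus_monom[symmetric] add.commute)
  also have "\<dots> = (\<Sum>j\<le>m. of_nat (m choose j) * monom (-1) 1 ^ j * 1 ^ (m - j))"
    by (rule binomial_ring)
  also have "\<dots> = (\<Sum>j\<le>m. monom (of_nat (m choose j) * (-1) ^ j) j)"
    by (intro sum.cong) (simp_all add: monom_power of_nat_poly smult_monom)
  finally show ?thesis
    by (simp add: sum_distrib_left mult_monom atLeast0AtMost add.commute)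
qed

text \<open>Binomial expansion of (X-1)^m; its umbral value is the translation
  formula for Euler polynomials.\<close>
lemma X_minus_one_power:
  "(monom (1::'a::comm_ring_1) 1 - 1) ^ m
     = (\<Sum>i=0..m. monom (of_nat (m choose i) * (-1) ^ (m - i)) i)"
proof -
  have "(monom (1::'a) 1 - 1) ^ m = (monom 1 1 + monom (-1) 0) ^ m"
    by (simp add: monom_0 one_pCons diff_conv_add_uminus)
  also have "\<dots> = (\<Sum>i\<le>m. of_nat (m choose i) * monom 1 1 ^ i * monom (-1) 0 ^ (m - i))"
    by (rule binomial_ring)
  also have "\<dots> = (\<Sum>i\<le>m. monom (of_nat (m choose i) * (-1) ^ (m - i)) i)"
    by (intro sum.cong) (simp_all add: monom_power of_nat_poly smult_monom mult_monom)
  finally show ?thesis by (simp add: atLeast0AtMost)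
qed

text \<open>The polynomial identity behind the theorem:
  \<Sum>j\<le>k. C(k,j) (X-1)^(n-j) = (X-1)^(n-k) ((X-1)+1)^k = (-1)^(n-k) X^k (1-X)^(n-k).\<close>
lemma binomial_sum_X_minus_one_powers:
  assumes "k \<le> n"
  shows "(\<Sum>j=0..k. smult (of_nat (k choose j)) ((monom 1 1 - 1) ^ (n - j)))
         = smult ((-1) ^ (n - k)) (monom 1 k * (1 - monom (1::'a::comm_ring_1) 1) ^ (n - k))"
proof -
  define a :: "'a poly" where "a = monom 1 1 - 1"
  have "(\<Sum>j=0..k. smult (of_nat (k choose j)) (a ^ (n - j)))
      = (\<Sum>j=0..k. smult (of_nat (k choose (k - j))) (a ^ (n - (k - j))))"
    by (subst sum.atLeastAtMost_rev) simp
  also have "\<dots> = (\<Sum>j=0..k. smult (of_nat (k choose j)) (a ^ (n - k) * a ^ j))"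
    using assms
    by (intro sum.cong refl) (auto simp: power_add[symmetric] binomial_symmetric[symmetric])
  also have "\<dots> = a ^ (n - k) * (\<Sum>j\<le>k. of_nat (k choose j) * a ^ j * 1 ^ (k - j))"
    by (simp add: sum_distrib_left atLeast0AtMost of_nat_poly mult.commute mult.left_commute)
  also have "\<dots> = a ^ (n - k) * (a + 1) ^ k"
    by (simp add: binomial_ring)
  also have "a + 1 = monom 1 1" by (simp add: a_def)
  also have "a ^ m = smult ((-1) ^ m) ((1 - monom 1 1) ^ m)" for m
    unfolding a_def by (induction m) (auto simp: algebra_simps smult_diff_right)
  finally show ?thesis
    by (simp add: a_def monom_power mult.commute)
qed

lemma umbral_binomial_identity:
  fixes e :: "nat \<Rightarrow> 'a::comm_ring_1"
  assumes "k \<le> n"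
  shows "(\<Sum>j=0..n-k. of_nat (n - k choose j) * (-1) ^ j * e (j + k)) =
    (-1) ^ (n + k) * (\<Sum>j=0..k. of_nat (k choose j) *
        (\<Sum>i=0..n-j. of_nat (n - j choose i) * (-1) ^ (n - j - i) * e i))"
proof -
  let ?q = "monom 1 k * (1 - monom (1::'a) 1) ^ (n - k)"
  have lhs: "(\<Sum>j=0..n-k. of_nat (n - k choose j) * (-1) ^ j * e (j + k)) = umbral_eval n e ?q"
    unfolding monom_times_one_minus_X_power using assms
    by (subst umbral_eval_sum_monom) auto
  have translated: "(\<Sum>i=0..n-j. of_nat (n - j choose i) * (-1) ^ (n - j - i) * e i)
      = umbral_eval n e ((monom 1 1 - 1) ^ (n - j))" for j
    unfolding X_minus_one_power by (subst umbral_eval_sum_monom) (auto simp: mult.assoc)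
  have "(\<Sum>j=0..k. of_nat (k choose j) *
          (\<Sum>i=0..n-j. of_nat (n - j choose i) * (-1) ^ (n - j - i) * e i))
      = umbral_eval n e (\<Sum>j=0..k. smult (of_nat (k choose j)) ((monom 1 1 - 1) ^ (n - j)))"
    unfolding translated by (subst umbral_eval_sum_smult) auto
  also have "\<dots> = (-1) ^ (n - k) * umbral_eval n e ?q"
    unfolding binomial_sum_X_minus_one_powers[OF assms] umbral_eval_smult ..
  finally have rhs: "(\<Sum>j=0..k. of_nat (k choose j) *
          (\<Sum>i=0..n-j. of_nat (n - j choose i) * (-1) ^ (n - j - i) * e i))
      = (-1) ^ (n - k) * umbral_eval n e ?q" .
  have "n + k = (n - k) + 2 * k" using assms by simp
  then have sign: "(-1::'a) ^ (n + k) = (-1) ^ (n - k)"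
    by (simp only: power_add power_mult) simp
  show ?thesis unfolding lhs rhs sign by (simp flip: mult.assoc power_add)
qed


lemma exp_plus_one_times_euler_factor:
  "(fps_exp (1::real) + 1) * (fps_const 2 / (fps_exp 1 + 1)) = fps_const 2"
proof -
  have nz: "fps_nth (fps_exp (1::real) + 1) 0 \<noteq> 0" by simp
  hence "fps_exp (1::real) + 1 \<noteq> 0" by (metis fps_zero_nth)
  with nz show ?thesis
    by (subst mult.commute, intro fps_times_divide_eq) auto
qed

lemma higher_euler_order_recurrence:
  assumes "p \<ge> 1"
  shows "higher_euler p m x + higher_euler p m (x - 1) = 2 * higher_euler (p - 1) m (x - 1)"
proof -
  define A where "A = fps_const (2::real) / (fps_exp 1 + 1)"
  have A_power: "A ^ p = A * A ^ (p - 1)" using assms by (cases p) auto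
  have exp_shift: "fps_exp x = fps_exp (x - 1) * fps_exp (1::real)"
    by (simp flip: fps_exp_add_mult)
  have "fps_exp x * A ^ p + fps_exp (x - 1) * A ^ p
      = fps_exp (x - 1) * ((fps_exp 1 + 1) * A) * A ^ (p - 1)"
    unfolding A_power exp_shift by (simp add: algebra_simps)
  also have "\<dots> = fps_const 2 * (fps_exp (x - 1) * A ^ (p - 1))"
    unfolding A_def exp_plus_one_times_euler_factor by (simp add: algebra_simps)
  finally have "fact m * fps_nth (fps_exp x * A ^ p + fps_exp (x - 1) * A ^ p) m
      = fact m * fps_nth (fps_const 2 * (fps_exp (x - 1) * A ^ (p - 1))) m"
    by simp
  then show ?thesis
    unfolding higher_euler_def A_def[symmetric] by (simp add: algebra_simps)
qed

text \<open>Translation formula (T): E^(p)_m(x-1) = \<Sum>i\<le>m. C(m,i) (-1)^(m-i) E^(p)_i(x),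
  the coefficient form of multiplying the generating function by e^(-t).\<close>
lemma higher_euler_translate:
  "higher_euler p m (x - 1)
     = (\<Sum>i=0..m. real (m choose i) * (-1) ^ (m - i) * higher_euler p i x)"
proof -
  define G where "G = fps_exp x * (fps_const (2::real) / (fps_exp 1 + 1)) ^ p"
  have "fps_exp (x - 1) * (fps_const (2::real) / (fps_exp 1 + 1)) ^ p = G * fps_exp (-1)"
    unfolding G_def by (simp add: algebra_simps flip: fps_exp_add_mult)
  then have "higher_euler p m (x - 1) = fact m * fps_nth (G * fps_exp (-1)) m"
    unfolding higher_euler_def by simp
  also have "\<dots> = fact m * (\<Sum>i=0..m. fps_nth G i * ((-1) ^ (m - i) / fact (m - i)))"
    unfolding fps_mult_nth by simp
  also have "\<dots> = (\<Sum>i=0..m. real (m choose i) * (-1) ^ (m - i) * (fact i * fps_nth G i))"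
    unfolding sum_distrib_left
  proof (intro sum.cong refl)
    fix i assume "i \<in> {0..m}"
    then have "real (m choose i) = fact m / (fact i * fact (m - i))"
      by (simp add: binomial_fact)
    then show "fact m * (fps_nth G i * ((-1) ^ (m - i) / fact (m - i)))
        = real (m choose i) * (-1) ^ (m - i) * (fact i * fps_nth G i)"
      by (simp add: field_simps)
  qed
  finally show ?thesis unfolding higher_euler_def G_def .
qed


theorem mainTheorem10:
  fixes p k n :: nat and x :: real
  assumes "p \<ge> 1" and "k \<le> n"
  shows "(\<Sum>j=0..n-k. real (n - k choose j) * (-1) ^ j * higher_euler p (j + k) x) =
         (-1) ^ (n + k + 1) * (\<Sum>j=0..k. real (k choose j) * higher_euler p (n - j) x)
         + 2 * (-1) ^ (n + k) * (\<Sum>j=0..k. real (k choose j) * higher_euler (p - 1) (n - j) (x - 1))"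
proof -
  let ?E = "\<lambda>m y. higher_euler p m y" and ?E' = "\<lambda>m y. higher_euler (p - 1) m y"
  have "(\<Sum>j=0..n-k. real (n - k choose j) * (-1) ^ j * ?E (j + k) x)
      = (-1) ^ (n + k) * (\<Sum>j=0..k. real (k choose j) * ?E (n - j) (x - 1))"
    using umbral_binomial_identity[OF assms(2), of "\<lambda>i. ?E i x"]
    by (simp add: higher_euler_translate)
  also have "\<dots> = (-1) ^ (n + k) *
      (\<Sum>j=0..k. real (k choose j) * (2 * ?E' (n - j) (x - 1) - ?E (n - j) x))"
    using higher_euler_order_recurrence[OF assms(1)]
    by (intro arg_cong[where f="\<lambda>s. _ * s"] sum.cong refl) (metis add_diff_cancel_left')
  also have "\<dots> = (-1) ^ (n + k) * (2 * (\<Sum>j=0..k. real (k choose j) * ?E' (n - j) (x - 1))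
      - (\<Sum>j=0..k. real (k choose j) * ?E (n - j) x))"
    by (simp add: right_diff_distrib sum_subtractf sum_distrib_left mult.left_commute)
  finally show ?thesis by (simp add: algebra_simps)
qed

end
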